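(* For every integer $k\ge 0$, the set ${\bf Forb}(\Gamma_{\le k})$ is non-empty.
   Context: For a finite graph $G$ and indeterminates $X_G=\{x_u : u\in V(G)\}$, the generalized Laplacian matrix $L(G,X_G)$ is the $V(G)\times V(G)$ matrix over $\mathbb{Z}[X_G]$ with $(u,u)$-entry $x_u$ and $(u,v)$-entry $-m_{uv}$ for $u\ne v$, $m_{uv}$ being the number of edges between $u$ and $v$. The $i$-th critical ideal $I_i(G,X_G)$ is the ideal of $\mathbb{Z}[X_G]$ generated by all $i\times i$ minors of $L(G,X_G)$ (with $I_i=\langle1\rangle$ for $i<1$, $I_i=\langle 0\rangle$ for $i>|V(G)|$). The algebraic co-rank $\gamma(G)$ is the number of critical ideals of $G$ equal to $\langle 1\rangle$. $\Gamma_{\le k}$ is the set of simple connected graphs with $\gamma\le k$; ${\bf Forb}(\Gamma_{\le k})$ is the set of minimal (under induced subgraphs) simple connected graphs $G$ with $\gamma(G)\ge k+1$, equivalently the simple connected graphs $G$ with $\gamma(G)=k+1$ and $\gamma(G\setminus v)<\gamma(G)$ for all vertices $v$. *)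

theory Defs
  imports "HOL-Library.Poly_Mapping" "Jordan_Normal_Form.Determinant"
begin

text \<open>Multivariate integer polynomials Z[x_v : v in nat]: monomials are finitely
supported exponent vectors, polynomials finitely supported coefficient maps.\<close>
type_synonym ipoly = "(nat \<Rightarrow>\<^sub>0 nat) \<Rightarrow>\<^sub>0 int"

definition Var :: "nat \<Rightarrow> ipoly" where
  "Var u = Poly_Mapping.single (Poly_Mapping.single u 1) 1"

definition simple_graph :: "nat set \<Rightarrow> (nat \<Rightarrow> nat \<Rightarrow> bool) \<Rightarrow> bool" where
  "simple_graph V E \<longleftrightarrow> finite V \<and> (\<forall>u v. E u v \<longrightarrow> u \<in> V \<and> v \<in> V)
     \<and> (\<forall>u v. E u v \<longrightarrow> E v u) \<and> (\<forall>u. \<not> E u u)"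

definition connected_graph :: "nat set \<Rightarrow> (nat \<Rightarrow> nat \<Rightarrow> bool) \<Rightarrow> bool" where
  "connected_graph V E \<longleftrightarrow> V \<noteq> {} \<and> (\<forall>u\<in>V. \<forall>v\<in>V. E\<^sup>*\<^sup>* u v)"

definition del_vertex_E :: "(nat \<Rightarrow> nat \<Rightarrow> bool) \<Rightarrow> nat \<Rightarrow> nat \<Rightarrow> nat \<Rightarrow> bool" where
  "del_vertex_E E v = (\<lambda>a b. E a b \<and> a \<noteq> v \<and> b \<noteq> v)"

text \<open>Entries of the generalized Laplacian L(G,X_G) (simple graph: m_uv is 0 or 1).\<close>
definition gen_lap :: "(nat \<Rightarrow> nat \<Rightarrow> bool) \<Rightarrow> nat \<Rightarrow> nat \<Rightarrow> ipoly" where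
  "gen_lap E u v = (if u = v then Var u else if E u v then -1 else 0)"

definition minors :: "nat set \<Rightarrow> (nat \<Rightarrow> nat \<Rightarrow> bool) \<Rightarrow> nat \<Rightarrow> ipoly set" where
  "minors V E i = {det (mat i i (\<lambda>(a, b). gen_lap E (sorted_list_of_set R ! a)
                                                    (sorted_list_of_set C ! b)))
                   | R C. R \<subseteq> V \<and> C \<subseteq> V \<and> card R = i \<and> card C = i}"

definition generates_unit_ideal :: "'a::comm_ring_1 set \<Rightarrow> bool" where
  "generates_unit_ideal S \<longleftrightarrow> (\<exists>F c. finite F \<and> F \<subseteq> S \<and> (\<Sum>m\<in>F. c m * m) = 1)"

definition alg_corank :: "nat set \<Rightarrow> (nat \<Rightarrow> nat \<Rightarrow> bool) \<Rightarrow> nat" where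
  "alg_corank V E = card {i \<in> {1..card V}. generates_unit_ideal (minors V E i)}"

definition in_Forb :: "nat \<Rightarrow> nat set \<Rightarrow> (nat \<Rightarrow> nat \<Rightarrow> bool) \<Rightarrow> bool" where
  "in_Forb k V E \<longleftrightarrow> simple_graph V E \<and> connected_graph V E \<and>
     alg_corank V E = k + 1 \<and>
     (\<forall>v\<in>V. alg_corank (V - {v}) (del_vertex_E E v) < alg_corank V E)"

end

theory Submission
  imports Defs
begin

text \<open>The path on \<open>k + 2\<close> vertices lies in \<open>Forb(\<Gamma>\<^sub>\<le>\<^sub>k)\<close>. For the path on \<open>n\<close> vertices the
  \<open>i \<times> i\<close> minor with rows \<open>0..i-1\<close> and columns \<open>1..i\<close> is triangular with diagonal \<open>-1\<close>, so
  \<open>I\<^sub>i = \<langle>1\<rangle>\<close> for all \<open>i < n\<close>. On the other hand, for every graph the full determinant of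
  \<open>L(G, X\<^sub>G)\<close> vanishes when each \<open>x\<^sub>u\<close> is specialised to the degree of \<open>u\<close> (the ordinary
  Laplacian has zero row sums), so \<open>I\<^sub>|\<^sub>V\<^sub>| \<noteq> \<langle>1\<rangle>\<close> and \<open>\<gamma>(G) < |V|\<close>. Hence the path has
  \<open>\<gamma> = n - 1\<close>, while deleting any vertex leaves a graph on \<open>n - 1\<close> vertices with smaller
  \<open>\<gamma>\<close>.\<close>

subsection \<open>Evaluation of integer polynomials\<close>

definition monom_eval :: "(nat \<Rightarrow> 'a::comm_ring_1) \<Rightarrow> (nat \<Rightarrow>\<^sub>0 nat) \<Rightarrow> 'a" where
  "monom_eval a m = (\<Prod>v\<in>Poly_Mapping.keys m. a v ^ Poly_Mapping.lookup m v)"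

definition ipoly_eval :: "(nat \<Rightarrow> 'a::comm_ring_1) \<Rightarrow> ipoly \<Rightarrow> 'a" where
  "ipoly_eval a p = (\<Sum>m\<in>Poly_Mapping.keys p. of_int (Poly_Mapping.lookup p m) * monom_eval a m)"

lemma monom_eval_eq_prod:
  assumes "finite S" "Poly_Mapping.keys m \<subseteq> S"
  shows "monom_eval a m = (\<Prod>v\<in>S. a v ^ Poly_Mapping.lookup m v)"
  unfolding monom_eval_def
  by (rule prod.mono_neutral_left) (use assms in \<open>auto simp: in_keys_iff\<close>)

lemma monom_eval_add: "monom_eval a (m + m') = monom_eval a m * monom_eval a m'"
proof -
  let ?S = "Poly_Mapping.keys m \<union> Poly_Mapping.keys m'"
  have "monom_eval a (m + m') = (\<Prod>v\<in>?S. a v ^ Poly_Mapping.lookup (m + m') v)"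
    by (rule monom_eval_eq_prod) (use keys_add[of m m'] in auto)
  also have "\<dots> = (\<Prod>v\<in>?S. a v ^ Poly_Mapping.lookup m v) * (\<Prod>v\<in>?S. a v ^ Poly_Mapping.lookup m' v)"
    by (simp add: lookup_add power_add prod.distrib)
  also have "\<dots> = monom_eval a m * monom_eval a m'"
    by (subst (1 2) monom_eval_eq_prod[of ?S]) auto
  finally show ?thesis .
qed

lemma ipoly_eval_eq_sum:
  assumes "finite S" "Poly_Mapping.keys p \<subseteq> S"
  shows "ipoly_eval a p = (\<Sum>m\<in>S. of_int (Poly_Mapping.lookup p m) * monom_eval a m)"
  unfolding ipoly_eval_def
  by (rule sum.mono_neutral_left) (use assms in \<open>auto simp: in_keys_iff\<close>)

lemma ipoly_eval_add: "ipoly_eval a (p + q) = ipoly_eval a p + ipoly_eval a q"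
proof -
  let ?S = "Poly_Mapping.keys p \<union> Poly_Mapping.keys q"
  let ?t = "\<lambda>r m. of_int (Poly_Mapping.lookup r m) * monom_eval a m"
  have "ipoly_eval a (p + q) = (\<Sum>m\<in>?S. ?t (p + q) m)"
    by (rule ipoly_eval_eq_sum) (use keys_add[of p q] in auto)
  also have "\<dots> = (\<Sum>m\<in>?S. ?t p m) + (\<Sum>m\<in>?S. ?t q m)"
    by (simp add: lookup_add distrib_right sum.distrib)
  also have "\<dots> = ipoly_eval a p + ipoly_eval a q"
    by (subst (1 2) ipoly_eval_eq_sum[of ?S]) auto
  finally show ?thesis .
qed

lemma ipoly_eval_single: "ipoly_eval a (Poly_Mapping.single m c) = of_int c * monom_eval a m"
  by (simp add: ipoly_eval_def)

lemma poly_mapping_add_single_induct: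
  fixes P :: "('a \<Rightarrow>\<^sub>0 'b::monoid_add) \<Rightarrow> bool"
  assumes "P 0" "\<And>f m c. P f \<Longrightarrow> P (f + Poly_Mapping.single m c)"
  shows "P f"
proof (induct f rule: update_induct)
  case const
  then show ?case using assms(1) .
next
  case (update f m c)
  have "Poly_Mapping.update m c f = f + Poly_Mapping.single m c"
    using update(1)
    by (intro poly_mapping_eqI) (auto simp: lookup_update lookup_add lookup_single in_keys_iff when_def)
  then show ?case using assms(2)[OF update(3)] by simp
qed

lemma ipoly_eval_mult_single:
  "ipoly_eval a (Poly_Mapping.single m c * q) = of_int c * monom_eval a m * ipoly_eval a q"
proof (induct q rule: poly_mapping_add_single_induct)
  case 1
  then show ?case by (simp add: ipoly_eval_def)
next
  case (2 f m' c')
  then show ?case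
    by (simp only: distrib_left ipoly_eval_add mult_single ipoly_eval_single monom_eval_add)
      (simp add: ring_distribs)
qed

lemma ipoly_eval_mult: "ipoly_eval a (p * q) = ipoly_eval a p * ipoly_eval a q"
proof (induct p rule: poly_mapping_add_single_induct)
  case 1
  then show ?case by (simp add: ipoly_eval_def)
next
  case (2 f m c)
  then show ?case
    by (simp only: distrib_right ipoly_eval_add ipoly_eval_mult_single)
      (simp add: ipoly_eval_single ring_distribs)
qed

lemma comm_ring_hom_ipoly_eval: "comm_ring_hom (ipoly_eval a)"
proof unfold_locales
  show "ipoly_eval a 1 = 1"
    using ipoly_eval_single[of a 0 1] by (simp add: monom_eval_def)
qed (simp_all add: ipoly_eval_def[of a 0] ipoly_eval_mult ipoly_eval_add)

lemma ipoly_eval_Var: "ipoly_eval a (Var u) = a u"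
  by (simp add: Var_def ipoly_eval_single monom_eval_def)

lemma generates_unit_ideal_if_dvd_one:
  assumes "x \<in> S" "x dvd 1"
  shows "generates_unit_ideal S"
proof -
  from \<open>x dvd 1\<close> obtain y where "1 = x * y" by (rule dvdE)
  then have "(\<Sum>m\<in>{x}. (\<lambda>_. y) m * m) = 1" by (simp add: mult.commute)
  then show ?thesis
    unfolding generates_unit_ideal_def using \<open>x \<in> S\<close>
    by (intro exI[of _ "{x}"] exI[of _ "\<lambda>_. y"]) simp
qed

lemma not_generates_unit_ideal_if_hom_vanishes:
  assumes "comm_ring_hom h" "\<And>m. m \<in> S \<Longrightarrow> h m = 0"
  shows "\<not> generates_unit_ideal S"
proof
  interpret h: comm_ring_hom h by fact
  assume "generates_unit_ideal S"
  then obtain F c where F: "finite F" "F \<subseteq> S" "(\<Sum>m\<in>F. c m * m) = 1"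
    unfolding generates_unit_ideal_def by blast
  have "h (\<Sum>m\<in>F. c m * m) = (\<Sum>m\<in>F. h (c m) * h m)"
    by (simp add: h.hom_sum h.hom_mult)
  also have "\<dots> = 0"
    using F(2) assms(2) by (intro sum.neutral) auto
  finally show False using F(3) by simp
qed

subsection \<open>The top critical ideal is never trivial\<close>

lemma det_eq_0_if_row_sums_zero:
  fixes A :: "'a::idom mat"
  assumes "A \<in> carrier_mat n n" "0 < n" "\<And>i. i < n \<Longrightarrow> (\<Sum>j<n. A $$ (i, j)) = 0"
  shows "det A = 0"
proof -
  let ?one = "vec n (\<lambda>_. 1) :: 'a vec"
  have "?one $ 0 \<noteq> 0\<^sub>v n $ 0" using \<open>0 < n\<close> by simp
  then have "?one \<noteq> 0\<^sub>v n" by metis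
  moreover have "A *\<^sub>v ?one = 0\<^sub>v n"
    using assms by (intro eq_vecI) (auto simp: scalar_prod_def row_def lessThan_atLeast0)
  ultimately show ?thesis
    unfolding det_0_iff_vec_prod_zero[OF assms(1)] by (intro exI[of _ ?one] conjI vec_carrier)
qed

definition vertex_degree :: "nat set \<Rightarrow> (nat \<Rightarrow> nat \<Rightarrow> bool) \<Rightarrow> nat \<Rightarrow> nat" where
  "vertex_degree V E u = card {w \<in> V. E u w}"

lemma gen_lap_row_sum_at_degrees:
  assumes "simple_graph V E" "u \<in> V"
  shows "(\<Sum>w\<in>V. ipoly_eval (\<lambda>x. int (vertex_degree V E x)) (gen_lap E u w)) = 0"
proof -
  let ?a = "\<lambda>x. int (vertex_degree V E x)"
  interpret h: comm_ring_hom "ipoly_eval ?a" by (rule comm_ring_hom_ipoly_eval)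
  have fin: "finite V" and irr: "\<not> E u u"
    using assms(1) by (auto simp: simple_graph_def)
  have "(\<Sum>w\<in>V-{u}. ipoly_eval ?a (gen_lap E u w)) = (\<Sum>w\<in>V-{u}. if E u w then -1 else 0)"
    by (rule sum.cong) (auto simp: gen_lap_def h.hom_uminus)
  also have "\<dots> = - ?a u"
  proof -
    have "(V - {u}) \<inter> Collect (E u) = {w \<in> V. E u w}" using irr by auto
    then show ?thesis using fin by (simp add: sum.If_cases vertex_degree_def)
  qed
  finally have "(\<Sum>w\<in>V-{u}. ipoly_eval ?a (gen_lap E u w)) = - ?a u" .
  moreover have "(\<Sum>w\<in>V. ipoly_eval ?a (gen_lap E u w))
      = ipoly_eval ?a (gen_lap E u u) + (\<Sum>w\<in>V-{u}. ipoly_eval ?a (gen_lap E u w))"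
    using fin assms(2) by (simp add: sum.remove)
  ultimately show ?thesis by (simp add: gen_lap_def ipoly_eval_Var)
qed

lemma full_minor_at_degrees:
  assumes G: "simple_graph V E" and "V \<noteq> {}" and m: "m \<in> minors V E (card V)"
  shows "ipoly_eval (\<lambda>x. int (vertex_degree V E x)) m = 0"
proof -
  let ?a = "\<lambda>x. int (vertex_degree V E x)"
  let ?n = "card V"
  let ?s = "sorted_list_of_set V"
  interpret h: comm_ring_hom "ipoly_eval ?a" by (rule comm_ring_hom_ipoly_eval)
  have fin: "finite V" using G by (simp add: simple_graph_def)
  have bij: "bij_betw (nth ?s) {..<?n} V"
    using bij_betw_nth[of ?s "{..<length ?s}" "set ?s"] fin by simp
  from m obtain R C where "R \<subseteq> V" "C \<subseteq> V" "card R = ?n" "card C = ?n"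
    and m_def: "m = det (mat ?n ?n (\<lambda>(i, j). gen_lap E (sorted_list_of_set R ! i) (sorted_list_of_set C ! j)))"
    unfolding minors_def by blast
  then have "R = V" "C = V" using card_subset_eq[OF fin] by blast+
  let ?M = "mat ?n ?n (\<lambda>(i, j). ipoly_eval ?a (gen_lap E (?s ! i) (?s ! j)))"
  have "ipoly_eval ?a m = det ?M"
    unfolding m_def \<open>R = V\<close> \<open>C = V\<close> h.hom_det[symmetric] by (intro arg_cong[where f = det] eq_matI) auto
  also have "\<dots> = 0"
  proof (rule det_eq_0_if_row_sums_zero)
    show "0 < ?n" using fin \<open>V \<noteq> {}\<close> by (simp add: card_gt_0_iff)
    fix i assume i: "i < ?n"
    then have "?s ! i \<in> V" using bij by (auto dest: bij_betw_apply)
    have "(\<Sum>j<?n. ?M $$ (i, j)) = (\<Sum>j<?n. ipoly_eval ?a (gen_lap E (?s ! i) (?s ! j)))"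
      using i by simp
    also have "\<dots> = (\<Sum>w\<in>V. ipoly_eval ?a (gen_lap E (?s ! i) w))"
      by (rule sum.reindex_bij_betw[OF bij])
    also have "\<dots> = 0" by (rule gen_lap_row_sum_at_degrees[OF G \<open>?s ! i \<in> V\<close>])
    finally show "(\<Sum>j<?n. ?M $$ (i, j)) = 0" .
  qed simp
  finally show ?thesis .
qed

lemma alg_corank_less_card:
  assumes "simple_graph V E" "V \<noteq> {}"
  shows "alg_corank V E < card V"
proof -
  have "\<not> generates_unit_ideal (minors V E (card V))"
    using assms full_minor_at_degrees
    by (intro not_generates_unit_ideal_if_hom_vanishes[OF comm_ring_hom_ipoly_eval])
  then have "{i \<in> {1..card V}. generates_unit_ideal (minors V E i)} \<subseteq> {1..card V - 1}"
    by (auto simp: le_eq_less_or_eq)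
  then have "alg_corank V E \<le> card V - 1"
    unfolding alg_corank_def by (metis card_atLeastAtMost card_mono diff_Suc_1 finite_atLeastAtMost)
  moreover have "0 < card V"
    using assms by (simp add: simple_graph_def card_gt_0_iff)
  ultimately show ?thesis by linarith
qed

lemma simple_graph_del_vertex:
  "simple_graph V E \<Longrightarrow> simple_graph (V - {v}) (del_vertex_E E v)"
  by (auto simp: simple_graph_def del_vertex_E_def)

subsection \<open>Paths\<close>

definition path_graph :: "nat \<Rightarrow> nat \<Rightarrow> nat \<Rightarrow> bool" where
  "path_graph n = (\<lambda>a b. a < n \<and> b < n \<and> (a = Suc b \<or> b = Suc a))"

lemma simple_graph_path_graph: "simple_graph {0..<n} (path_graph n)"
  by (auto simp: simple_graph_def path_graph_def)

lemma path_graph_rtranclp_from_0: "j < n \<Longrightarrow> (path_graph n)\<^sup>*\<^sup>* 0 j"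
proof (induct j)
  case (Suc j)
  then have "path_graph n j (Suc j)" by (simp add: path_graph_def)
  with Suc show ?case by (simp add: rtranclp.rtrancl_into_rtrancl)
qed simp

lemma connected_graph_path_graph:
  assumes "0 < n"
  shows "connected_graph {0..<n} (path_graph n)"
proof -
  have "symp (path_graph n)" by (auto simp: symp_def path_graph_def)
  then have "symp (path_graph n)\<^sup>*\<^sup>*" by (rule symp_rtranclp)
  then have "(path_graph n)\<^sup>*\<^sup>* i j" if "i < n" "j < n" for i j
    using that path_graph_rtranclp_from_0 by (meson rtranclp_trans sympD)
  then show ?thesis using assms by (auto simp: connected_graph_def)
qed

lemma generates_unit_ideal_minors_path_graph:
  assumes "1 \<le> i" "i < n"
  shows "generates_unit_ideal (minors {0..<n} (path_graph n) i)"
proof -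
  let ?M = "mat i i (\<lambda>(a, b). gen_lap (path_graph n)
              (sorted_list_of_set {0..<i} ! a) (sorted_list_of_set {1..<i+1} ! b))"
  let ?N = "mat i i (\<lambda>(a, b). gen_lap (path_graph n) a (Suc b))"
  have "det ?M \<in> minors {0..<n} (path_graph n) i"
    unfolding minors_def using assms
    by (intro CollectI exI[of _ "{0..<i}"] exI[of _ "{1..<i+1}"]) auto
  moreover have "?M = ?N"
    by (rule eq_matI) (auto simp del: upt_Suc simp: nth_upt)
  moreover have "det ?N = prod_list (diag_mat ?N)"
    by (rule det_lower_triangular[of i]) (auto simp: gen_lap_def path_graph_def)
  moreover have "diag_mat ?N = replicate i (-1)"
    using assms by (auto simp: diag_mat_def gen_lap_def path_graph_def intro: nth_equalityI)
  ultimately have "det ?M \<in> minors {0..<n} (path_graph n) i" "det ?M = (-1) ^ i"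
    by (simp_all add: prod_list_replicate)
  moreover have "(-1 :: ipoly) ^ i dvd 1"
    by (rule dvdI[of _ _ "(-1) ^ i"]) (simp flip: power_mult_distrib)
  ultimately show ?thesis
    by (intro generates_unit_ideal_if_dvd_one) auto
qed

lemma alg_corank_path_graph:
  assumes "0 < n"
  shows "alg_corank {0..<n} (path_graph n) = n - 1"
proof -
  have "{1..n - 1} \<subseteq> {i \<in> {1..card {0..<n}}. generates_unit_ideal (minors {0..<n} (path_graph n) i)}"
    using generates_unit_ideal_minors_path_graph by auto
  then have "card {1..n - 1} \<le> alg_corank {0..<n} (path_graph n)"
    unfolding alg_corank_def by (intro card_mono) auto
  moreover have "alg_corank {0..<n} (path_graph n) < n"
    using alg_corank_less_card[OF simple_graph_path_graph] assms by simp
  ultimately show ?thesis by simp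
qed

theorem corollary5p4:
  fixes k :: nat
  shows "\<exists>V E. in_Forb k V E"
proof (intro exI)
  let ?V = "{0..<k + 2}"
  let ?E = "path_graph (k + 2)"
  have "alg_corank (?V - {v}) (del_vertex_E ?E v) < k + 1" if "v \<in> ?V" for v
  proof -
    have card: "card (?V - {v}) = k + 1"
      using that by simp
    then have "?V - {v} \<noteq> {}"
      by (metis card.empty add_is_0 zero_neq_one)
    then have "alg_corank (?V - {v}) (del_vertex_E ?E v) < card (?V - {v})"
      by (intro alg_corank_less_card simple_graph_del_vertex simple_graph_path_graph)
    with card show ?thesis by simp
  qed
  then show "in_Forb k ?V ?E"
    unfolding in_Forb_def
    using simple_graph_path_graph connected_graph_path_graph alg_corank_path_graph[of "k + 2"]
    by simp
qed

end
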